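(* Let $\Gamma=(Q,A,E,(\delta_e)_{e\in E})$ be an MEMDP, $q\in Q$, and $W$ a parity objective. Then $$\sup_{\tau\in\mathcal D(\mathrm{Strat}(Q,A))}\mathrm{val}^{\mathrm{uni}}_q(\Gamma,\tau,W)=\mathrm{val}^{\mathrm{uni}}_q(\Gamma,W).$$
   Context: $\mathcal D(X)$ is the set of distributions on $X$ with countable support. An MDP $G=(Q,A,\delta)$ has finite non-empty $Q,A$ and $\delta:Q\times A\to\mathcal D(Q)$; strategies are maps $\sigma:Q\cdot(A\cdot Q)^*\to\mathcal D(A)$, $\mathrm{Strat}(Q,A)$ is their set, and $\mathbb P^\sigma_q[G,\cdot]$ is the induced probability measure on infinite runs from $q$ (infinite state sequences measured by projection). A mixed strategy is $\tau\in\mathcal D(\mathrm{Strat}(Q,A))$ (countable support), with $\mathbb P^\tau_q[G,\cdot]:=\sum_\sigma\tau(\sigma)\mathbb P^\sigma_q[G,\cdot]$. A parity objective given by $f:Q\to\mathbb N$ is the set of infinite state sequences whose maximal label seen infinitely often is even. An MEMDP is $\Gamma=(Q,A,E,(\delta_e)_{e\in E})$ with $E$ finite non-empty and each $\Gamma[e]=(Q,A,\delta_e)$ an MDP. $\mathrm{val}^{\mathrm{uni}}_q(\Gamma,\tau,W)=\min_{e\in E}\mathbb P^\tau_q[\Gamma[e],W]$ and $\mathrm{val}^{\mathrm{uni}}_q(\Gamma,W)=\sup_{\sigma\in\mathrm{Strat}(Q,A)}\min_{e\in E}\mathbb P^\sigma_q[\Gamma[e],W]$. *)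

theory Defs
  imports "HOL-Probability.Probability"
begin

type_synonym ('q, 'a) hist = "'q \<times> ('a \<times> 'q) list"

text \<open>Strategies: maps from histories to distributions with countable support (pmf) on actions.
  Strat(Q,A) is the set of all such functions (the whole function type).\<close>
type_synonym ('q, 'a) strat = "('q, 'a) hist \<Rightarrow> 'a pmf"

definition hlast :: "('q, 'a) hist \<Rightarrow> 'q" where
  "hlast h = (if snd h = [] then fst h else snd (last (snd h)))"

definition step_kernel ::
  "('q \<Rightarrow> 'a \<Rightarrow> 'q pmf) \<Rightarrow> ('q, 'a) strat \<Rightarrow> ('q, 'a) hist \<Rightarrow> ('a \<times> 'q) pmf" where
  "step_kernel \<delta> \<sigma> h = do { a \<leftarrow> \<sigma> h; q' \<leftarrow> \<delta> (hlast h) a; return_pmf (a, q') }"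

text \<open>Given one independent sample of the step kernel for every history, the play from q
  extends the current history by the sample attached to it.\<close>
primrec hpath :: "'q \<Rightarrow> (('q, 'a) hist \<Rightarrow> ('a \<times> 'q)) \<Rightarrow> nat \<Rightarrow> ('q, 'a) hist" where
  "hpath q \<omega> 0 = (q, [])"
| "hpath q \<omega> (Suc n) = (fst (hpath q \<omega> n), snd (hpath q \<omega> n) @ [\<omega> (hpath q \<omega> n)])"

text \<open>Since each history is visited at most once,
  using independent samples per history yields exactly the law of the induced run.\<close>
definition run_measure ::
  "('q \<Rightarrow> 'a \<Rightarrow> 'q pmf) \<Rightarrow> ('q, 'a) strat \<Rightarrow> 'q \<Rightarrow> 'q stream measure" where
  "run_measure \<delta> \<sigma> q =
     distr (PiM UNIV (\<lambda>h. measure_pmf (step_kernel \<delta> \<sigma> h)))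
           (stream_space (count_space UNIV))
           (\<lambda>\<omega>. to_stream (\<lambda>n. hlast (hpath q \<omega> n)))"

definition parity :: "('q \<Rightarrow> nat) \<Rightarrow> 'q stream set" where
  "parity f = {\<omega>. even (Max (f ` {s. \<exists>\<^sub>\<infinity>n. \<omega> !! n = s}))}"

definition mixed_prob ::
  "('q \<Rightarrow> 'a \<Rightarrow> 'q pmf) \<Rightarrow> ('q, 'a) strat pmf \<Rightarrow> 'q \<Rightarrow> 'q stream set \<Rightarrow> real" where
  "mixed_prob \<delta> \<tau> q W = (\<Sum>\<^sub>\<infinity>\<sigma>\<in>set_pmf \<tau>. pmf \<tau> \<sigma> * measure (run_measure \<delta> \<sigma> q) W)"

definition val_uni_mixed ::
  "'e set \<Rightarrow> ('e \<Rightarrow> 'q \<Rightarrow> 'a \<Rightarrow> 'q pmf) \<Rightarrow> 'q \<Rightarrow> ('q, 'a) strat pmf \<Rightarrow> 'q stream set \<Rightarrow> real" where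
  "val_uni_mixed E \<delta> q \<tau> W = (MIN e\<in>E. mixed_prob (\<delta> e) \<tau> q W)"

definition val_uni ::
  "'e set \<Rightarrow> ('e \<Rightarrow> 'q \<Rightarrow> 'a \<Rightarrow> 'q pmf) \<Rightarrow> 'q \<Rightarrow> 'q stream set \<Rightarrow> real" where
  "val_uni E \<delta> q W = (SUP \<sigma>. MIN e\<in>E. measure (run_measure (\<delta> e) \<sigma> q) W)"

end

theory Submission
  imports Defs
begin

text \<open>
  A mixed strategy \<open>\<tau>\<close> is outcome-equivalent, in every MDP over the same states and actions, to
  the behavioural strategy that plays \<open>a\<close> after history \<open>h\<close> with probability
  \<open>E\<^sub>\<tau>[w\<^sub>\<sigma>(h) \<sigma>(h)(a)] / E\<^sub>\<tau>[w\<^sub>\<sigma>(h)]\<close>, where \<open>w\<^sub>\<sigma>(h)\<close> is the probability that \<open>\<sigma>\<close>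
  chooses the actions recorded in \<open>h\<close> (Kuhn's theorem; histories record all actions, so recall is
  perfect). This behavioural strategy does not depend on the transition function, so it achieves
  the mixture's probability in all environments at once and mixing cannot increase the universal
  value; conversely a pure strategy is a Dirac mixture.
\<close>

lemma fst_hpath [simp]: "fst (hpath q \<omega> n) = q"
  by (induction n) auto

lemma length_hpath [simp]: "length (snd (hpath q \<omega> n)) = n"
  by (induction n) auto

lemma hpath_prefix: "i \<le> n \<Longrightarrow> hpath q \<omega> i = (q, take i (snd (hpath q \<omega> n)))"
proof (induction n)
  case (Suc n)
  then show ?case
    by (cases "i = Suc n") (auto simp: prod_eq_iff)
qed simp

lemma nth_hpath: "i < n \<Longrightarrow> snd (hpath q \<omega> n) ! i = \<omega> (hpath q \<omega> i)"
proof (induction n)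
  case (Suc n)
  then show ?case by (cases "i = n") (auto simp: nth_append)
qed simp

lemma hpath_eq_iff:
  "hpath q \<omega> n = (q', l) \<longleftrightarrow> q' = q \<and> length l = n \<and> (\<forall>i<n. \<omega> (q, take i l) = l ! i)"
proof
  assume "hpath q \<omega> n = (q', l)"
  then show "q' = q \<and> length l = n \<and> (\<forall>i<n. \<omega> (q, take i l) = l ! i)"
    using hpath_prefix[of _ n q \<omega>] nth_hpath[of _ n q \<omega>]
    by (metis fst_conv snd_conv fst_hpath length_hpath less_imp_le)
next
  assume "q' = q \<and> length l = n \<and> (\<forall>i<n. \<omega> (q, take i l) = l ! i)"
  then show "hpath q \<omega> n = (q', l)"
  proof (induction n arbitrary: l)
    case (Suc n)
    then obtain l0 x where l: "l = l0 @ [x]"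
      by (metis length_Suc_conv_rev)
    have "hpath q \<omega> n = (q', l0)"
      using Suc.prems l by (intro Suc.IH) (auto simp: nth_append)
    moreover have "\<omega> (q, l0) = x"
      using Suc.prems l by (auto dest: spec[of _ n])
    ultimately show ?case
      using Suc.prems l by simp
  qed simp
qed

definition hist_prob :: "('q \<Rightarrow> 'a \<Rightarrow> 'q pmf) \<Rightarrow> ('q, 'a) strat \<Rightarrow> ('q, 'a) hist \<Rightarrow> real" where
  "hist_prob \<delta> \<sigma> h =
     (\<Prod>i<length (snd h). pmf (step_kernel \<delta> \<sigma> (fst h, take i (snd h))) (snd h ! i))"

definition strat_weight :: "('q, 'a) strat \<Rightarrow> ('q, 'a) hist \<Rightarrow> real" where
  "strat_weight \<sigma> h = (\<Prod>i<length (snd h). pmf (\<sigma> (fst h, take i (snd h))) (fst (snd h ! i)))"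

definition trans_weight :: "('q \<Rightarrow> 'a \<Rightarrow> 'q pmf) \<Rightarrow> ('q, 'a) hist \<Rightarrow> real" where
  "trans_weight \<delta> h =
     (\<Prod>i<length (snd h). pmf (\<delta> (hlast (fst h, take i (snd h))) (fst (snd h ! i))) (snd (snd h ! i)))"

lemma pmf_step_kernel:
  "pmf (step_kernel \<delta> \<sigma> h) x = pmf (\<sigma> h) (fst x) * pmf (\<delta> (hlast h) (fst x)) (snd x)"
proof (cases x)
  case (Pair a q')
  have "step_kernel \<delta> \<sigma> h = bind_pmf (\<sigma> h) (\<lambda>b. map_pmf (Pair b) (\<delta> (hlast h) b))"
    unfolding step_kernel_def map_pmf_def by simp
  moreover have "pmf (map_pmf (Pair b) (\<delta> (hlast h) b)) (a, q') =
      indicator {a} b * pmf (\<delta> (hlast h) a) q'" for b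
    by (cases "b = a") (auto simp: pmf_map_inj'[of "Pair a", unfolded inj_def] pmf_eq_0_set_pmf)
  ultimately show ?thesis
    using Pair by (simp add: pmf_bind measure_pmf_single)
qed

lemma hist_prob_eq: "hist_prob \<delta> \<sigma> h = strat_weight \<sigma> h * trans_weight \<delta> h"
  unfolding hist_prob_def strat_weight_def trans_weight_def pmf_step_kernel
  by (simp add: prod.distrib)

lemma strat_weight_Nil [simp]: "strat_weight \<sigma> (q, []) = 1"
  by (simp add: strat_weight_def)

lemma strat_weight_snoc: "strat_weight \<sigma> (q, l @ [x]) = strat_weight \<sigma> (q, l) * pmf (\<sigma> (q, l)) (fst x)"
  unfolding strat_weight_def by (simp add: prod.lessThan_Suc nth_append)

lemma strat_weight_nonneg: "0 \<le> strat_weight \<sigma> h"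
  unfolding strat_weight_def by (simp add: prod_nonneg)

lemma strat_weight_le_1: "strat_weight \<sigma> h \<le> 1"
  unfolding strat_weight_def by (intro prod_le_1) (auto simp: pmf_le_1)

lemma hist_prob_nonneg: "0 \<le> hist_prob \<delta> \<sigma> h"
  unfolding hist_prob_def by (simp add: prod_nonneg)

lemma hist_prob_le_1: "hist_prob \<delta> \<sigma> h \<le> 1"
  unfolding hist_prob_def by (intro prod_le_1) (auto simp: pmf_le_1)

abbreviation sample_measure ::
  "('q \<Rightarrow> 'a \<Rightarrow> 'q pmf) \<Rightarrow> ('q, 'a) strat \<Rightarrow> (('q, 'a) hist \<Rightarrow> 'a \<times> 'q) measure" where
  "sample_measure \<delta> \<sigma> \<equiv> PiM UNIV (\<lambda>h. measure_pmf (step_kernel \<delta> \<sigma> h))"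

abbreviation sample_run :: "'q \<Rightarrow> (('q, 'a) hist \<Rightarrow> 'a \<times> 'q) \<Rightarrow> 'q stream" where
  "sample_run q \<omega> \<equiv> to_stream (\<lambda>n. hlast (hpath q \<omega> n))"

lemma product_prob_space_step_kernel:
  "product_prob_space (\<lambda>h. measure_pmf (step_kernel \<delta> \<sigma> h))"
  by (rule product_prob_spaceI) (simp add: measure_pmf.prob_space_axioms)

lemma emeasure_hpath_eq:
  fixes \<delta> :: "'q \<Rightarrow> 'a \<Rightarrow> 'q pmf" and l :: "('a \<times> 'q) list"
  assumes "length l = n"
  shows "emeasure (sample_measure \<delta> \<sigma>) {\<omega>. hpath q \<omega> n = (q, l)} = ennreal (hist_prob \<delta> \<sigma> (q, l))"
proof -
  interpret product_prob_space "\<lambda>h. measure_pmf (step_kernel \<delta> \<sigma> h)" UNIV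
    by (rule product_prob_space_step_kernel)
  define J where "J = (\<lambda>i. (q, take i l)) ` {..<n}"
  define X where "X = (\<lambda>j::('q, 'a) hist. {l ! length (snd j)})"
  have inj: "inj_on (\<lambda>i. (q, take i l)) {..<n}"
    using assms by (intro inj_onI) (metis length_take min.absorb4 lessThan_iff snd_conv)
  txt \<open>The event fixes exactly the samples at the \<open>n\<close> prefixes of \<open>l\<close>, which are independent.\<close>
  have "{\<omega>. hpath q \<omega> n = (q, l)} = prod_emb UNIV (\<lambda>h. measure_pmf (step_kernel \<delta> \<sigma> h)) J (PiE J X)"
    unfolding hpath_eq_iff prod_emb_def J_def X_def using assms
    by (auto simp: PiE_iff min_def)
  also have "emeasure (sample_measure \<delta> \<sigma>) \<dots> = (\<Prod>j\<in>J. emeasure (measure_pmf (step_kernel \<delta> \<sigma> j)) (X j))"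
    by (rule emeasure_PiM_emb) (auto simp: J_def)
  also have "\<dots> = (\<Prod>i<n. ennreal (pmf (step_kernel \<delta> \<sigma> (q, take i l)) (l ! i)))"
    unfolding J_def X_def using assms
    by (subst prod.reindex[OF inj]) (auto intro!: prod.cong simp: min_def emeasure_pmf_single)
  also have "\<dots> = ennreal (hist_prob \<delta> \<sigma> (q, l))"
    unfolding hist_prob_def using assms by (simp add: prod_ennreal)
  finally show ?thesis .
qed

lemma measurable_hpath:
  fixes \<delta> :: "'q::countable \<Rightarrow> 'a::countable \<Rightarrow> 'q pmf"
  shows "(\<lambda>\<omega>. hpath q \<omega> n) \<in> sample_measure \<delta> \<sigma> \<rightarrow>\<^sub>M count_space UNIV"
proof (induction n)
  case (Suc n)
  have "(\<lambda>\<omega>. \<omega> h) \<in> sample_measure \<delta> \<sigma> \<rightarrow>\<^sub>M count_space UNIV" for h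
    using measurable_component_singleton[of h UNIV "\<lambda>h. measure_pmf (step_kernel \<delta> \<sigma> h)"]
    by simp
  then have "(\<lambda>\<omega>. (fst h, snd h @ [\<omega> h])) \<in> sample_measure \<delta> \<sigma> \<rightarrow>\<^sub>M count_space UNIV" for h
    by (rule measurable_compose) simp
  then have "(\<lambda>\<omega>. (\<lambda>h \<omega>. (fst h, snd h @ [\<omega> h])) (hpath q \<omega> n) \<omega>)
      \<in> sample_measure \<delta> \<sigma> \<rightarrow>\<^sub>M count_space UNIV"
    by (rule measurable_compose_countable[OF _ Suc])
  then show ?case
    by simp
qed simp

lemma measurable_sample_run:
  fixes \<delta> :: "'q::countable \<Rightarrow> 'a::countable \<Rightarrow> 'q pmf"
  shows "sample_run q \<in> sample_measure \<delta> \<sigma> \<rightarrow>\<^sub>M stream_space (count_space UNIV)"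
  by (rule measurable_stream_space2)
     (simp add: to_stream_def measurable_compose[OF measurable_hpath])

lemma prob_space_run_measure:
  fixes \<delta> :: "'q::countable \<Rightarrow> 'a::countable \<Rightarrow> 'q pmf"
  shows "prob_space (run_measure \<delta> \<sigma> q)"
proof -
  interpret product_prob_space "\<lambda>h. measure_pmf (step_kernel \<delta> \<sigma> h)" UNIV
    by (rule product_prob_space_step_kernel)
  show ?thesis
    unfolding run_measure_def by (rule prob_space_distr[OF measurable_sample_run])
qed

lemma sets_run_measure [simp]:
  "sets (run_measure \<delta> \<sigma> q) = sets (stream_space (count_space UNIV))"
  unfolding run_measure_def by simp

definition hists_with_states :: "'q \<Rightarrow> 'q list \<Rightarrow> ('q, 'a) hist set" where
  "hists_with_states q xs = {h. fst h = q \<and> length (snd h) = length xs - 1 \<and>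
     (\<forall>i<length xs. hlast (q, take i (snd h)) = xs ! i)}"

lemma finite_hists_with_states:
  "finite (hists_with_states q xs :: ('q::finite, 'a::finite) hist set)"
proof (rule finite_subset)
  show "hists_with_states q xs \<subseteq> {q} \<times> {l. set l \<subseteq> UNIV \<and> length l = length xs - 1}"
    unfolding hists_with_states_def by auto
qed (intro finite_cartesian_product finite_lists_length_eq; simp)

lemma sample_run_in_sstart_iff:
  "sample_run q \<omega> \<in> sstart UNIV xs \<longleftrightarrow> hpath q \<omega> (length xs - 1) \<in> hists_with_states q xs"
proof -
  have "hlast (hpath q \<omega> i) = hlast (q, take i (snd (hpath q \<omega> (length xs - 1))))"
    if "i < length xs" for i
    using that by (subst hpath_prefix[of i "length xs - 1"]) auto
  then show ?thesis
    by (simp add: sstart_eq to_stream_def hists_with_states_def)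
qed

lemma emeasure_run_measure_sstart:
  fixes \<delta> :: "'q::finite \<Rightarrow> 'a::finite \<Rightarrow> 'q pmf"
  shows "emeasure (run_measure \<delta> \<sigma> q) (sstart UNIV xs) =
    (\<Sum>h\<in>hists_with_states q xs. ennreal (hist_prob \<delta> \<sigma> h))"
proof -
  let ?m = "length xs - 1"
  have preimage: "sample_run q -` sstart UNIV xs \<inter> space (sample_measure \<delta> \<sigma>) =
      (\<Union>h\<in>hists_with_states q xs. {\<omega>. hpath q \<omega> ?m = h})"
    by (auto simp: sample_run_in_sstart_iff space_PiM)
  have "emeasure (run_measure \<delta> \<sigma> q) (sstart UNIV xs) =
      emeasure (sample_measure \<delta> \<sigma>) (\<Union>h\<in>hists_with_states q xs. {\<omega>. hpath q \<omega> ?m = h})"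
    unfolding run_measure_def
    by (simp add: emeasure_distr[OF measurable_sample_run] preimage)
  also have "\<dots> = (\<Sum>h\<in>hists_with_states q xs. emeasure (sample_measure \<delta> \<sigma>) {\<omega>. hpath q \<omega> ?m = h})"
  proof (rule sum_emeasure[symmetric])
    have "(\<lambda>\<omega>. hpath q \<omega> ?m) -` {h} \<inter> space (sample_measure \<delta> \<sigma>) \<in> sets (sample_measure \<delta> \<sigma>)" for h
      by (rule measurable_sets[OF measurable_hpath]) simp
    then show "(\<lambda>h. {\<omega>. hpath q \<omega> ?m = h}) ` hists_with_states q xs \<subseteq> sets (sample_measure \<delta> \<sigma>)"
      by (auto simp: vimage_def space_PiM)
  qed (auto simp: disjoint_family_on_def finite_hists_with_states)
  also have "\<dots> = (\<Sum>h\<in>hists_with_states q xs. ennreal (hist_prob \<delta> \<sigma> h))"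
    by (intro sum.cong refl) (auto simp: hists_with_states_def emeasure_hpath_eq)
  finally show ?thesis .
qed

definition mixed_weight :: "('q, 'a) strat pmf \<Rightarrow> ('q, 'a) hist \<Rightarrow> real" where
  "mixed_weight \<tau> h = (\<integral>\<sigma>. strat_weight \<sigma> h \<partial>measure_pmf \<tau>)"

definition mixed_action_weight :: "('q, 'a) strat pmf \<Rightarrow> ('q, 'a) hist \<Rightarrow> 'a \<Rightarrow> real" where
  "mixed_action_weight \<tau> h a = (\<integral>\<sigma>. strat_weight \<sigma> h * pmf (\<sigma> h) a \<partial>measure_pmf \<tau>)"

text \<open>At histories of weight zero the choice is irrelevant.\<close>
definition behavioural_strat :: "('q, 'a::finite) strat pmf \<Rightarrow> ('q, 'a) strat" where
  "behavioural_strat \<tau> h =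
     (if mixed_weight \<tau> h = 0 then return_pmf undefined
      else embed_pmf (\<lambda>a. mixed_action_weight \<tau> h a / mixed_weight \<tau> h))"

lemma integrable_strat_weight: "integrable (measure_pmf \<tau>) (\<lambda>\<sigma>. strat_weight \<sigma> h)"
  by (rule measure_pmf.integrable_const_bound[where B = 1])
     (auto simp: strat_weight_nonneg strat_weight_le_1)

lemma integrable_strat_weight_action:
  "integrable (measure_pmf \<tau>) (\<lambda>\<sigma>. strat_weight \<sigma> h * pmf (\<sigma> h) a)"
  by (rule measure_pmf.integrable_const_bound[where B = 1])
     (auto simp: strat_weight_nonneg strat_weight_le_1 pmf_le_1 intro!: mult_le_one)

lemma integrable_hist_prob: "integrable (measure_pmf \<tau>) (\<lambda>\<sigma>. hist_prob \<delta> \<sigma> h)"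
  by (rule measure_pmf.integrable_const_bound[where B = 1])
     (auto simp: hist_prob_nonneg hist_prob_le_1)

lemma mixed_action_weight_nonneg: "0 \<le> mixed_action_weight \<tau> h a"
  unfolding mixed_action_weight_def by (rule integral_nonneg_AE) (simp add: strat_weight_nonneg)

lemma mixed_action_weight_le: "mixed_action_weight \<tau> h a \<le> mixed_weight \<tau> h"
  unfolding mixed_action_weight_def mixed_weight_def
  by (rule integral_mono[OF integrable_strat_weight_action integrable_strat_weight])
     (simp add: strat_weight_nonneg pmf_le_1 mult_left_le)

lemma sum_mixed_action_weight: "(\<Sum>a\<in>UNIV. mixed_action_weight \<tau> h (a::'a::finite)) = mixed_weight \<tau> h"
proof -
  have "(\<Sum>a\<in>UNIV. mixed_action_weight \<tau> h a) =
      (\<integral>\<sigma>. (\<Sum>a\<in>UNIV. strat_weight \<sigma> h * pmf (\<sigma> h) a) \<partial>measure_pmf \<tau>)"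
    unfolding mixed_action_weight_def
    by (rule Bochner_Integration.integral_sum[symmetric]) (rule integrable_strat_weight_action)
  then show ?thesis
    by (simp add: mixed_weight_def sum_distrib_left[symmetric] sum_pmf_eq_1)
qed

lemma pmf_behavioural_strat:
  assumes "mixed_weight \<tau> h \<noteq> 0"
  shows "pmf (behavioural_strat \<tau> h) a = mixed_action_weight \<tau> h a / mixed_weight \<tau> h"
proof -
  have pos: "mixed_weight \<tau> h > 0"
    using assms mixed_action_weight_le[of \<tau> h a] mixed_action_weight_nonneg[of \<tau> h a] by linarith
  have "(\<integral>\<^sup>+a. ennreal (mixed_action_weight \<tau> h a / mixed_weight \<tau> h) \<partial>count_space UNIV) =
      ennreal (\<Sum>a\<in>UNIV. mixed_action_weight \<tau> h a / mixed_weight \<tau> h)"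
    by (simp add: nn_integral_count_space_finite sum_ennreal mixed_action_weight_nonneg pos less_imp_le)
  also have "\<dots> = 1"
    using pos by (simp add: sum_divide_distrib[symmetric] sum_mixed_action_weight)
  finally have "pmf (embed_pmf (\<lambda>a. mixed_action_weight \<tau> h a / mixed_weight \<tau> h)) a =
      mixed_action_weight \<tau> h a / mixed_weight \<tau> h"
    by (intro pmf_embed_pmf) (auto simp: mixed_action_weight_nonneg pos less_imp_le)
  then show ?thesis
    using assms by (simp add: behavioural_strat_def)
qed

lemma strat_weight_behavioural_strat: "strat_weight (behavioural_strat \<tau>) h = mixed_weight \<tau> h"
proof (cases h)
  case (Pair q l)
  txt \<open>The factors \<open>mixed_action_weight / mixed_weight\<close> along the history telescope.\<close>
  show ?thesis unfolding Pair
  proof (induction l rule: rev_induct)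
    case Nil
    then show ?case by (simp add: mixed_weight_def)
  next
    case (snoc x l)
    have "mixed_weight \<tau> (q, l @ [x]) = mixed_action_weight \<tau> (q, l) (fst x)"
      unfolding mixed_weight_def mixed_action_weight_def by (simp add: strat_weight_snoc)
    moreover have "mixed_action_weight \<tau> (q, l) (fst x) = 0" if "mixed_weight \<tau> (q, l) = 0"
      using that mixed_action_weight_le[of \<tau> "(q, l)" "fst x"]
        mixed_action_weight_nonneg[of \<tau> "(q, l)" "fst x"] by linarith
    ultimately show ?case
      using snoc by (cases "mixed_weight \<tau> (q, l) = 0") (simp_all add: strat_weight_snoc pmf_behavioural_strat)
  qed
qed

lemma hist_prob_behavioural_strat:
  "hist_prob \<delta> (behavioural_strat \<tau>) h = (\<integral>\<sigma>. hist_prob \<delta> \<sigma> h \<partial>measure_pmf \<tau>)"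
  by (simp add: hist_prob_eq strat_weight_behavioural_strat mixed_weight_def)

lemma run_measure_behavioural_strat:
  fixes \<delta> :: "'q::finite \<Rightarrow> 'a::finite \<Rightarrow> 'q pmf"
  shows "run_measure \<delta> (behavioural_strat \<tau>) q = measure_pmf \<tau> \<bind> (\<lambda>\<sigma>. run_measure \<delta> \<sigma> q)"
proof -
  have \<tau>: "measure_pmf \<tau> \<in> space (prob_algebra (measure_pmf \<tau>))"
    by (simp add: space_prob_algebra measure_pmf.prob_space_axioms)
  have runs: "(\<lambda>\<sigma>. run_measure \<delta> \<sigma> q) \<in> measure_pmf \<tau> \<rightarrow>\<^sub>M prob_algebra (stream_space (count_space UNIV))"
    by (simp add: space_prob_algebra prob_space_run_measure)
  show ?thesis
  proof (rule stream_space_eq_sstart[where S = UNIV])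
    fix xs :: "'q list"
    have "emeasure (run_measure \<delta> (behavioural_strat \<tau>) q) (sstart UNIV xs) =
        (\<Sum>h\<in>hists_with_states q xs. \<integral>\<^sup>+\<sigma>. ennreal (hist_prob \<delta> \<sigma> h) \<partial>measure_pmf \<tau>)"
      by (simp add: emeasure_run_measure_sstart hist_prob_behavioural_strat
          nn_integral_eq_integral integrable_hist_prob hist_prob_nonneg)
    also have "\<dots> = \<integral>\<^sup>+\<sigma>. emeasure (run_measure \<delta> \<sigma> q) (sstart UNIV xs) \<partial>measure_pmf \<tau>"
      by (simp add: emeasure_run_measure_sstart nn_integral_sum)
    also have "\<dots> = emeasure (measure_pmf \<tau> \<bind> (\<lambda>\<sigma>. run_measure \<delta> \<sigma> q)) (sstart UNIV xs)"
      by (rule emeasure_bind_prob_algebra[OF \<tau> runs, symmetric]) simp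
    finally show "emeasure (run_measure \<delta> (behavioural_strat \<tau>) q) (sstart UNIV xs) =
        emeasure (measure_pmf \<tau> \<bind> (\<lambda>\<sigma>. run_measure \<delta> \<sigma> q)) (sstart UNIV xs)" .
  qed (auto simp: prob_space_run_measure prob_space_bind'[OF \<tau> runs] sets_bind'[OF \<tau> runs])
qed

lemma mixed_prob_eq_behavioural_strat:
  fixes \<delta> :: "'q::finite \<Rightarrow> 'a::finite \<Rightarrow> 'q pmf"
  shows "mixed_prob \<delta> \<tau> q W = measure (run_measure \<delta> (behavioural_strat \<tau>) q) W"
proof -
  have "measure (run_measure \<delta> (behavioural_strat \<tau>) q) W =
      (\<integral>\<sigma>. measure (run_measure \<delta> \<sigma> q) W \<partial>measure_pmf \<tau>)"
  proof (cases "W \<in> sets (stream_space (count_space UNIV))")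
    case True
    have "(\<lambda>\<sigma>. run_measure \<delta> \<sigma> q) \<in> measure_pmf \<tau> \<rightarrow>\<^sub>M subprob_algebra (stream_space (count_space UNIV))"
      by (simp add: space_subprob_algebra prob_space_imp_subprob_space prob_space_run_measure)
    then show ?thesis
      unfolding run_measure_behavioural_strat by (rule measure_pmf.measure_bind[OF _ True])
  qed (simp add: measure_notin_sets)
  also have "\<dots> = infsetsum (\<lambda>\<sigma>. pmf \<tau> \<sigma> * measure (run_measure \<delta> \<sigma> q) W) (set_pmf \<tau>)"
    by (subst pmf_expectation_eq_infsetsum, rule infsetsum_cong_neutral) (auto simp: set_pmf_eq)
  also have "\<dots> = mixed_prob \<delta> \<tau> q W"
    unfolding mixed_prob_def
    by (intro infsetsum_infsum abs_summable_on_comparison_test'[OF pmf_abs_summable[of \<tau>]])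
       (simp add: mult_left_le prob_space.prob_le_1[OF prob_space_run_measure])
  finally show ?thesis ..
qed

lemma mixed_prob_return_pmf: "mixed_prob \<delta> (return_pmf \<sigma>) q W = measure (run_measure \<delta> \<sigma> q) W"
  by (simp add: mixed_prob_def)

lemma SUP_val_uni_mixed_eq_val_uni:
  fixes \<delta> :: "'e \<Rightarrow> 'q::finite \<Rightarrow> 'a::finite \<Rightarrow> 'q pmf"
  shows "(SUP \<tau>. val_uni_mixed E \<delta> q \<tau> W) = val_uni E \<delta> q W"
proof -
  define val where "val \<sigma> = (MIN e\<in>E. measure (run_measure (\<delta> e) \<sigma> q) W)" for \<sigma>
  have behavioural: "val_uni_mixed E \<delta> q \<tau> W = val (behavioural_strat \<tau>)" for \<tau>
    by (simp add: val_uni_mixed_def val_def mixed_prob_eq_behavioural_strat)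
  have pure: "val_uni_mixed E \<delta> q (return_pmf \<sigma>) W = val \<sigma>" for \<sigma>
    by (simp add: val_uni_mixed_def val_def mixed_prob_return_pmf)
  have "range (\<lambda>\<tau>. val_uni_mixed E \<delta> q \<tau> W) = range val"
  proof
    show "range (\<lambda>\<tau>. val_uni_mixed E \<delta> q \<tau> W) \<subseteq> range val"
      using behavioural by auto
    show "range val \<subseteq> range (\<lambda>\<tau>. val_uni_mixed E \<delta> q \<tau> W)"
      using pure by (metis image_subsetI rangeI)
  qed
  then show ?thesis
    by (simp add: val_uni_def val_def)
qed

theorem mainTheorem7:
  fixes E :: "'e set"
    and \<delta> :: "'e \<Rightarrow> 'q::finite \<Rightarrow> 'a::finite \<Rightarrow> 'q pmf"
    and q :: 'q
    and f :: "'q \<Rightarrow> nat"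
  assumes "finite E" and "E \<noteq> {}"
  shows "(SUP \<tau>. val_uni_mixed E \<delta> q \<tau> (parity f)) = val_uni E \<delta> q (parity f)"
  by (rule SUP_val_uni_mixed_eq_val_uni)

end
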